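(* Let $S$ be a $\mathcal{C}$-semigroup with $S\ne\mathcal{C}$ and genus $g$. Then $S$ is symmetric if and only if $2g=\mathcal{F}(S)$.
   Context: An integer cone $\mathcal{C}\subseteq\mathbb{N}^p$ is the set of integer points of a finitely generated rational cone in $\mathbb{Q}_{\ge0}^p$. A $\mathcal{C}$-semigroup is a subset $S\subseteq\mathcal{C}$ containing $0$, closed under addition, with $\mathcal{C}\setminus S$ finite; $\mathcal{H}(S)=\mathcal{C}\setminus S$, $g=g(S)=\#\mathcal{H}(S)$. A monomial order $\preceq$ on $\mathbb{N}^p$ is fixed (total order, compatible with addition, $\mathbf 0\preceq\mathbf c$ for all $\mathbf c$), and $F(S)=\max_\preceq\mathcal{H}(S)$. $\mathrm{PF}(S)=\{\mathbf x\in\mathcal{H}(S)\mid \mathbf x+(S\setminus\{0\})\subseteq S\}$; $S$ is symmetric if $\mathrm{PF}(S)=\{F(S)\}$. $\mathbf x\le_{\mathcal{C}}\mathbf y$ means $\mathbf y-\mathbf x\in\mathcal{C}$; $I_S(\mathbf n)=\{\mathbf s\in S\mid \mathbf s\le_{\mathcal{C}}\mathbf n\}$. The generalized Frobenius number is $\mathcal{F}(S)=\#I_S(F(S))+g(S)$. *)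

theory Defs
  imports Complex_Main "HOL-Library.Function_Algebras"
begin

text \<open>Points of N^p are functions 'n => nat for a finite index type 'n (p = CARD('n)).
  Addition and zero are pointwise (HOL-Library.Function_Algebras).\<close>

definition integer_cone :: "('n::finite \<Rightarrow> nat) set \<Rightarrow> bool" where
  "integer_cone C \<longleftrightarrow>
     (\<exists>G :: ('n \<Rightarrow> rat) set. finite G \<and> (\<forall>g\<in>G. \<forall>i. g i \<ge> 0) \<and>
        C = {x. \<exists>l :: ('n \<Rightarrow> rat) \<Rightarrow> rat. (\<forall>g\<in>G. l g \<ge> 0) \<and>
                    (\<forall>i. of_nat (x i) = (\<Sum>g\<in>G. l g * g i))})"

definition C_semigroup :: "('n::finite \<Rightarrow> nat) set \<Rightarrow> ('n \<Rightarrow> nat) set \<Rightarrow> bool" where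
  "C_semigroup C S \<longleftrightarrow> integer_cone C \<and> S \<subseteq> C \<and> 0 \<in> S \<and>
     (\<forall>a\<in>S. \<forall>b\<in>S. a + b \<in> S) \<and> finite (C - S)"

definition monomial_order :: "(('n::finite \<Rightarrow> nat) \<Rightarrow> ('n \<Rightarrow> nat) \<Rightarrow> bool) \<Rightarrow> bool" where
  "monomial_order le \<longleftrightarrow>
     (\<forall>a. le a a) \<and> (\<forall>a b. le a b \<and> le b a \<longrightarrow> a = b) \<and>
     (\<forall>a b c. le a b \<and> le b c \<longrightarrow> le a c) \<and> (\<forall>a b. le a b \<or> le b a) \<and>
     (\<forall>a b c. le a b \<longrightarrow> le (a + c) (b + c)) \<and> (\<forall>c. le 0 c)"

definition gaps :: "('n \<Rightarrow> nat) set \<Rightarrow> ('n \<Rightarrow> nat) set \<Rightarrow> ('n \<Rightarrow> nat) set" where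
  "gaps C S = C - S"

definition genus :: "('n \<Rightarrow> nat) set \<Rightarrow> ('n \<Rightarrow> nat) set \<Rightarrow> nat" where
  "genus C S = card (gaps C S)"

definition frob :: "(('n \<Rightarrow> nat) \<Rightarrow> ('n \<Rightarrow> nat) \<Rightarrow> bool) \<Rightarrow> ('n \<Rightarrow> nat) set \<Rightarrow> ('n \<Rightarrow> nat) set \<Rightarrow> ('n \<Rightarrow> nat)" where
  "frob le C S = (THE x. x \<in> gaps C S \<and> (\<forall>y\<in>gaps C S. le y x))"

definition pseudo_frob :: "('n \<Rightarrow> nat) set \<Rightarrow> ('n \<Rightarrow> nat) set \<Rightarrow> ('n \<Rightarrow> nat) set" where
  "pseudo_frob C S = {x \<in> gaps C S. \<forall>s\<in>S - {0}. x + s \<in> S}"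

definition symmetric_Csg :: "(('n \<Rightarrow> nat) \<Rightarrow> ('n \<Rightarrow> nat) \<Rightarrow> bool) \<Rightarrow> ('n \<Rightarrow> nat) set \<Rightarrow> ('n \<Rightarrow> nat) set \<Rightarrow> bool" where
  "symmetric_Csg le C S \<longleftrightarrow> pseudo_frob C S = {frob le C S}"

text \<open>x \<le>_C y iff y - x \<in> C (the difference taken in Z^p).\<close>
definition cone_le :: "('n \<Rightarrow> nat) set \<Rightarrow> ('n \<Rightarrow> nat) \<Rightarrow> ('n \<Rightarrow> nat) \<Rightarrow> bool" where
  "cone_le C x y \<longleftrightarrow> (\<exists>c\<in>C. y = x + c)"

definition I_S :: "('n \<Rightarrow> nat) set \<Rightarrow> ('n \<Rightarrow> nat) set \<Rightarrow> ('n \<Rightarrow> nat) \<Rightarrow> ('n \<Rightarrow> nat) set" where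
  "I_S C S n = {s \<in> S. cone_le C s n}"

definition gen_frob :: "(('n \<Rightarrow> nat) \<Rightarrow> ('n \<Rightarrow> nat) \<Rightarrow> bool) \<Rightarrow> ('n \<Rightarrow> nat) set \<Rightarrow> ('n \<Rightarrow> nat) set \<Rightarrow> nat" where
  "gen_frob le C S = card (I_S C S (frob le C S)) + genus C S"

end

theory Submission
  imports Defs
begin

text \<open>A gap that is maximal, in the monomial order, among its translates h + s (s \<in> S) that
  are still gaps is pseudo-Frobenius. Hence F is pseudo-Frobenius, and every gap has a
  pseudo-Frobenius translate; so S is symmetric iff every gap h has the form F - s with
  s \<in> I_S(F). The reflection s \<mapsto> F - s maps I_S(F) injectively into the gaps (F - s \<in> S
  would force F \<in> S), so #I_S(F) \<le> g, with equality exactly when the reflection is onto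
  the gaps, i.e. exactly when S is symmetric.\<close>

lemma monomial_order_refl: "monomial_order le \<Longrightarrow> le a a"
  unfolding monomial_order_def by blast

lemma monomial_order_total: "monomial_order le \<Longrightarrow> le a b \<or> le b a"
  unfolding monomial_order_def by blast

lemma monomial_order_antisym: "monomial_order le \<Longrightarrow> le a b \<Longrightarrow> le b a \<Longrightarrow> a = b"
  unfolding monomial_order_def by blast

lemma monomial_order_trans: "monomial_order le \<Longrightarrow> le a b \<Longrightarrow> le b c \<Longrightarrow> le a c"
  unfolding monomial_order_def by blast

lemma monomial_order_le_add_right:
  assumes "monomial_order le" shows "le x (x + s)"
proof -
  have "le (0 + x) (s + x)"
    using assms unfolding monomial_order_def by blast
  then show ?thesis by (simp add: add.commute)
qed

lemma monomial_order_finite_has_max: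
  assumes mo: "monomial_order le" and "finite A" "A \<noteq> {}"
  shows "\<exists>x\<in>A. \<forall>y\<in>A. le y x"
  using assms(2,3)
proof (induction A rule: finite_ne_induct)
  case (singleton x)
  then show ?case by (simp add: monomial_order_refl[OF mo])
next
  case (insert a A)
  then obtain x where x: "x \<in> A" "\<forall>y\<in>A. le y x" by blast
  show ?case
  proof (cases "le a x")
    case True
    then show ?thesis using x by auto
  next
    case False
    then have "le x a" using monomial_order_total[OF mo] by blast
    with x have "\<forall>y\<in>insert a A. le y a"
      using monomial_order_refl[OF mo] monomial_order_trans[OF mo] by blast
    then show ?thesis by blast
  qed
qed

lemma integer_cone_add:
  assumes "integer_cone C" "x \<in> C" "y \<in> C" shows "x + y \<in> C"
proof -
  obtain G where C: "C = {x. \<exists>l :: ('a \<Rightarrow> rat) \<Rightarrow> rat. (\<forall>g\<in>G. l g \<ge> 0) \<and>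
                    (\<forall>i. of_nat (x i) = (\<Sum>g\<in>G. l g * g i))}"
    using assms(1) unfolding integer_cone_def by blast
  obtain l1 where l1: "\<forall>g\<in>G. l1 g \<ge> 0" "\<forall>i. of_nat (x i) = (\<Sum>g\<in>G. l1 g * g i)"
    using assms(2) C by blast
  obtain l2 where l2: "\<forall>g\<in>G. l2 g \<ge> 0" "\<forall>i. of_nat (y i) = (\<Sum>g\<in>G. l2 g * g i)"
    using assms(3) C by blast
  have "\<forall>g\<in>G. l1 g + l2 g \<ge> 0" using l1 l2 by auto
  moreover have "\<forall>i. of_nat ((x + y) i) = (\<Sum>g\<in>G. (l1 g + l2 g) * g i)"
    using l1(2) l2(2) by (simp add: distrib_right sum.distrib)
  ultimately show ?thesis
    unfolding C mem_Collect_eq by (intro exI[of _ "\<lambda>g. l1 g + l2 g"] conjI)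
qed

lemma frob_max_gap:
  assumes mo: "monomial_order le" and "finite (gaps C S)" "gaps C S \<noteq> {}"
  shows "frob le C S \<in> gaps C S" and "\<forall>y\<in>gaps C S. le y (frob le C S)"
proof -
  obtain x where x: "x \<in> gaps C S" "\<forall>y\<in>gaps C S. le y x"
    using monomial_order_finite_has_max[OF assms] by blast
  have "frob le C S = x" unfolding frob_def
  proof (rule the_equality)
    fix z assume "z \<in> gaps C S \<and> (\<forall>y\<in>gaps C S. le y z)"
    with x show "z = x" by (blast intro: monomial_order_antisym[OF mo])
  qed (use x in blast)
  with x show "frob le C S \<in> gaps C S" and "\<forall>y\<in>gaps C S. le y (frob le C S)" by auto
qed

lemma pseudo_frobI_maximal_translate:
  assumes mo: "monomial_order le" and "integer_cone C" "S \<subseteq> C"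
    and x: "x \<in> gaps C S" and max: "\<And>s. s \<in> S \<Longrightarrow> x + s \<in> gaps C S \<Longrightarrow> le (x + s) x"
  shows "x \<in> pseudo_frob C S"
proof -
  have "x + s \<in> S" if s: "s \<in> S - {0}" for s
  proof (rule ccontr)
    assume "x + s \<notin> S"
    moreover have "x + s \<in> C" using integer_cone_add assms(2,3) x s by (auto simp: gaps_def)
    ultimately have "le (x + s) x" using max s by (simp add: gaps_def)
    then have "x + s = x"
      using monomial_order_antisym[OF mo] monomial_order_le_add_right[OF mo] by blast
    with s show False by simp
  qed
  with x show ?thesis by (simp add: pseudo_frob_def)
qed

lemma frob_in_pseudo_frob:
  assumes mo: "monomial_order le" and "C_semigroup C S" "S \<noteq> C"
  shows "frob le C S \<in> pseudo_frob C S"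
proof -
  have cone: "integer_cone C" and SC: "S \<subseteq> C" and fin: "finite (gaps C S)"
    using assms(2) by (auto simp: C_semigroup_def gaps_def)
  have "gaps C S \<noteq> {}" using SC assms(3) by (auto simp: gaps_def)
  note F = frob_max_gap[OF mo fin this]
  show ?thesis
  proof (rule pseudo_frobI_maximal_translate[OF mo cone SC F(1)])
    fix s assume "frob le C S + s \<in> gaps C S"
    with F(2) show "le (frob le C S + s) (frob le C S)" by blast
  qed
qed

lemma gap_translate_pseudo_frob:
  fixes C S :: "('n::finite \<Rightarrow> nat) set" and le :: "('n \<Rightarrow> nat) \<Rightarrow> ('n \<Rightarrow> nat) \<Rightarrow> bool"
  assumes mo: "monomial_order le" and sg: "C_semigroup C S" and h: "h \<in> gaps C S"
  shows "\<exists>s\<in>S. h + s \<in> pseudo_frob C S"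
proof -
  define X where "X = {x \<in> gaps C S. \<exists>s\<in>S. x = h + s}"
  have fin: "finite (gaps C S)" and "0 \<in> S" using sg by (simp_all add: C_semigroup_def gaps_def)
  have "finite X" by (rule finite_subset[OF _ fin]) (auto simp: X_def)
  moreover have "h \<in> X" unfolding X_def using h \<open>0 \<in> S\<close> by (auto intro: bexI[of _ 0])
  ultimately obtain x where x: "x \<in> X" "\<forall>y\<in>X. le y x"
    using monomial_order_finite_has_max[OF mo] by blast
  then obtain s0 where s0: "s0 \<in> S" "x = h + s0" and xg: "x \<in> gaps C S" by (auto simp: X_def)
  have "x \<in> pseudo_frob C S"
  proof (rule pseudo_frobI_maximal_translate[OF mo _ _ xg])
    fix s assume "s \<in> S" "x + s \<in> gaps C S"
    moreover have "s0 + s \<in> S" using sg s0 \<open>s \<in> S\<close> by (simp add: C_semigroup_def)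
    ultimately have "x + s \<in> X" using s0 by (auto simp: X_def add.assoc)
    with x show "le (x + s) x" by blast
  qed (use sg in \<open>simp_all add: C_semigroup_def\<close>)
  with s0 show ?thesis by blast
qed

lemma mem_I_S_iff: "s \<in> I_S C S f \<longleftrightarrow> s \<in> S \<and> (\<exists>c\<in>C. f = s + c)"
  by (simp add: I_S_def cone_le_def)

lemma reflection_I_S_subset_gaps:
  assumes "C_semigroup C S" "f \<in> gaps C S"
  shows "(\<lambda>s. f - s) ` I_S C S f \<subseteq> gaps C S"
proof
  fix h assume "h \<in> (\<lambda>s. f - s) ` I_S C S f"
  then obtain s c where "s \<in> S" "c \<in> C" "f = s + c" "h = c" by (auto simp: mem_I_S_iff)
  with assms show "h \<in> gaps C S" by (auto simp: C_semigroup_def gaps_def)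
qed

lemma inj_on_reflection_I_S: "inj_on (\<lambda>s. f - s) (I_S C S f)"
proof (rule inj_onI)
  fix a b assume "a \<in> I_S C S f" "b \<in> I_S C S f" and eq: "f - a = f - b"
  then obtain c d where "f = a + c" "f = b + d" unfolding mem_I_S_iff by blast
  with eq show "a = b" by (metis add_diff_cancel_left' add_right_cancel)
qed

lemma gen_frob_eq_twice_genus_iff:
  assumes "monomial_order le" "C_semigroup C S" "S \<noteq> C"
  defines "F \<equiv> frob le C S"
  shows "2 * genus C S = gen_frob le C S \<longleftrightarrow> (\<lambda>s. F - s) ` I_S C S F = gaps C S"
proof -
  have fin: "finite (gaps C S)" using assms(2) by (simp add: C_semigroup_def gaps_def)
  have F: "F \<in> gaps C S"
    using frob_in_pseudo_frob[OF assms(1-3)] by (simp add: F_def pseudo_frob_def)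
  have card: "card ((\<lambda>s. F - s) ` I_S C S F) = card (I_S C S F)"
    by (rule card_image[OF inj_on_reflection_I_S])
  show ?thesis
  proof
    assume "2 * genus C S = gen_frob le C S"
    then have "card ((\<lambda>s. F - s) ` I_S C S F) = card (gaps C S)"
      using card by (simp add: gen_frob_def genus_def F_def)
    then show "(\<lambda>s. F - s) ` I_S C S F = gaps C S"
      using card_subset_eq[OF fin reflection_I_S_subset_gaps[OF assms(2) F]] by simp
  qed (use card in \<open>simp add: gen_frob_def genus_def F_def\<close>)
qed

lemma symmetric_iff_reflection_onto_gaps:
  assumes mo: "monomial_order le" and sg: "C_semigroup C S" and "S \<noteq> C"
  defines "F \<equiv> frob le C S"
  shows "symmetric_Csg le C S \<longleftrightarrow> (\<lambda>s. F - s) ` I_S C S F = gaps C S"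
proof -
  have F: "F \<in> pseudo_frob C S" using frob_in_pseudo_frob[OF assms(1-3)] by (simp add: F_def)
  then have "F \<in> gaps C S" by (simp add: pseudo_frob_def)
  note into = reflection_I_S_subset_gaps[OF sg this]
  have "(\<lambda>s. F - s) ` I_S C S F = gaps C S" if sym: "pseudo_frob C S = {F}"
  proof -
    have "h \<in> (\<lambda>s. F - s) ` I_S C S F" if h: "h \<in> gaps C S" for h
    proof -
      obtain s where s: "s \<in> S" "h + s \<in> pseudo_frob C S"
        using gap_translate_pseudo_frob[OF mo sg h] by blast
      with sym have "F = s + h" by (simp add: add.commute)
      with s h have "s \<in> I_S C S F" by (auto simp: mem_I_S_iff gaps_def)
      moreover have "h = F - s" using \<open>F = s + h\<close> by simp
      ultimately show ?thesis by blast
    qed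
    with into show ?thesis by blast
  qed
  moreover have "pseudo_frob C S = {F}" if onto: "(\<lambda>s. F - s) ` I_S C S F = gaps C S"
  proof -
    have "h = F" if h: "h \<in> pseudo_frob C S" for h
    proof (rule ccontr)
      assume "h \<noteq> F"
      from h onto have "h \<in> (\<lambda>s. F - s) ` I_S C S F" by (simp add: pseudo_frob_def)
      then obtain s where "s \<in> I_S C S F" "h = F - s" by blast
      then obtain c where s: "s \<in> S" "F = s + c" "h = c" unfolding mem_I_S_iff by auto
      with \<open>h \<noteq> F\<close> have "s \<in> S - {0}" by auto
      with h have "h + s \<in> S" by (simp add: pseudo_frob_def)
      moreover have "h + s = F" using s(2,3) by (simp add: add.commute)
      ultimately show False using F by (simp add: pseudo_frob_def gaps_def)
    qed
    with F show ?thesis by blast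
  qed
  ultimately show ?thesis unfolding symmetric_Csg_def F_def by blast
qed

theorem mainTheorem6:
  fixes C S :: "('n::finite \<Rightarrow> nat) set"
    and le :: "('n \<Rightarrow> nat) \<Rightarrow> ('n \<Rightarrow> nat) \<Rightarrow> bool"
  assumes "monomial_order le"
    and "C_semigroup C S"
    and "S \<noteq> C"
  shows "symmetric_Csg le C S \<longleftrightarrow> 2 * genus C S = gen_frob le C S"
  using symmetric_iff_reflection_onto_gaps[OF assms] gen_frob_eq_twice_genus_iff[OF assms]
  by simp

end
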